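(* Let $L>0$ and $m,r$ be integers with $1<r<m-1$. Then all coefficients in the $q$-expansion of \[ \frac{1}{(q;q^m)_L\,(q^{m-1};q^m)_L} - \frac{1}{(q^r;q^m)_L\,(q^{m-r};q^m)_L} \] are nonnegative if and only if $r\nmid(m-r)$ and $(m-r)\nmid r$.
   Context: $(a;q)_L=\prod_{j=0}^{L-1}(1-aq^j)$. *)

theory Defs
  imports "HOL-Computational_Algebra.Formal_Power_Series"
begin

text \<open>q-Pochhammer symbol (a;Q)_L = prod_{j<L} (1 - a Q^j) as a formal power series in q,
  specialised to a = q^k and Q = q^m, i.e. (q^k; q^m)_L = prod_{j<L} (1 - q^(k + m j)).\<close>
definition qpoch :: "nat \<Rightarrow> nat \<Rightarrow> nat \<Rightarrow> real fps" where
  "qpoch k m L = (\<Prod>j<L. 1 - fps_X ^ (k + m * j))"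

end

theory Submission
  imports Defs
begin

text \<open>
  The coefficient of \<open>q\<^sup>n\<close> in \<open>1 / ((q\<^sup>a; q\<^sup>m)\<^sub>L (q\<^sup>b; q\<^sup>m)\<^sub>L)\<close> counts the partitions of \<open>n\<close>
  into parts \<open>a + m j\<close> and \<open>b + m j\<close> with \<open>j < L\<close>. Put \<open>s = m - r\<close> and let a partition into
  parts \<open>r + m j\<close>, \<open>s + m j\<close> have \<open>U\<close> parts of the first and \<open>V\<close> of the second kind. If
  \<open>V \<le> U\<close>, take \<open>r - 1\<close> from every part \<open>r + m j\<close> and give \<open>r - 1\<close> to every part \<open>s + m j\<close>,
  adding the surplus \<open>(r - 1) (U - V)\<close> as ones; if \<open>U < V\<close>, do the same with \<open>r\<close> and \<open>s\<close>
  exchanged. The result is a partition into parts \<open>1 + m j\<close>, \<open>m - 1 + m j\<close> whose excess of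
  parts of the first over the second kind is \<open>r (U - V)\<close>, respectively \<open>s (V - U)\<close>, and this
  excess determines the preimage. The two cases can only collide on a common multiple of \<open>r\<close>
  and \<open>s\<close>; if neither of \<open>r\<close>, \<open>s\<close> divides the other, such an image contains at least
  \<open>m - 1\<close> ones, and merging \<open>m - 1\<close> of them into one part lowers the excess by \<open>m\<close>, to a
  number divisible by neither \<open>r\<close> nor \<open>s\<close>. The resulting injection shows that all
  coefficients are nonnegative. Conversely, if \<open>r\<close> divides \<open>s\<close>, then \<open>s\<close> has the two
  partitions \<open>s\<close> and \<open>r + \<dots> + r\<close> into parts \<open>r + m j\<close>, \<open>s + m j\<close>, but only one into
  parts \<open>1 + m j\<close>, \<open>m - 1 + m j\<close>; symmetrically if \<open>s\<close> divides \<open>r\<close>.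
\<close>

section \<open>Partitions with prescribed parts\<close>

definition weight :: "'a set \<Rightarrow> ('a \<Rightarrow> nat) \<Rightarrow> ('a \<Rightarrow> nat) \<Rightarrow> nat" where
  "weight I c x = (\<Sum>i\<in>I. x i * c i)"

text \<open>Partitions of \<open>n\<close> into parts \<open>c i\<close>, \<open>i \<in> I\<close>, recorded by their multiplicities; distinct
  indices count as distinct parts even if their sizes agree.\<close>

definition part_counts :: "'a set \<Rightarrow> ('a \<Rightarrow> nat) \<Rightarrow> nat \<Rightarrow> ('a \<Rightarrow> nat) set" where
  "part_counts I c n = {x. (\<forall>i. i \<notin> I \<longrightarrow> x i = 0) \<and> weight I c x = n}"

lemma part_counts_empty: "part_counts {} c n = (if n = 0 then {\<lambda>_. 0} else {})"
  by (auto simp: part_counts_def weight_def)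

lemma weight_fun_upd:
  assumes "finite I" "i \<in> I"
  shows "weight I c (x(i := t)) + x i * c i = weight I c x + t * c i"
  using assms by (simp add: weight_def sum.remove[of I i])

lemma weight_indicator:
  assumes "finite I" "i \<in> I"
  shows "weight I c (\<lambda>k. if k = i then t else 0) = t * c i"
proof -
  have "weight I c (\<lambda>k. if k = i then t else 0) = (\<Sum>k\<in>I. if k = i then t * c i else 0)"
    unfolding weight_def by (rule sum.cong) auto
  then show ?thesis
    using assms by simp
qed

lemma bij_betw_part_counts_insert:
  assumes "finite I" "a \<notin> I" "0 < c a"
  shows "bij_betw (\<lambda>x. (x a * c a, x(a := 0))) (part_counts (insert a I) c n)
           (SIGMA k:{k. k \<le> n \<and> c a dvd k}. part_counts I c (n - k))"
proof (rule bij_betw_byWitness[where f' = "\<lambda>(k, y). y(a := k div c a)"])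
  have weight_upd: "weight I c (x(a := t)) = weight I c x" for x t
    using assms(2) unfolding weight_def by (intro sum.cong) auto
  have weight_insert: "weight (insert a I) c x = x a * c a + weight I c x" for x
    using assms(1,2) by (simp add: weight_def)
  show "(\<lambda>x. (x a * c a, x(a := 0))) ` part_counts (insert a I) c n
          \<subseteq> (SIGMA k:{k. k \<le> n \<and> c a dvd k}. part_counts I c (n - k))"
    by (auto simp: part_counts_def weight_upd weight_insert)
  show "(\<lambda>(k, y). y(a := k div c a)) ` (SIGMA k:{k. k \<le> n \<and> c a dvd k}. part_counts I c (n - k))
          \<subseteq> part_counts (insert a I) c n"
    using assms(2,3) by (auto simp: part_counts_def weight_upd weight_insert)
qed (use assms(2,3) in \<open>auto simp: part_counts_def\<close>)

lemma finite_part_counts: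
  assumes "finite I" "\<forall>i\<in>I. 0 < c i"
  shows "finite (part_counts I c n)"
  using assms
proof (induction I arbitrary: n rule: finite_induct)
  case empty
  then show ?case by (simp add: part_counts_empty)
next
  case (insert a I)
  then show ?case
    using bij_betw_part_counts_insert[of I a c n] by (simp add: bij_betw_finite)
qed

lemma two_le_card_part_counts:
  assumes "finite I" "\<forall>k\<in>I. 0 < c k" "i \<in> I" "j \<in> I" "i \<noteq> j" "c i dvd c j"
  shows "2 \<le> card (part_counts I c (c j))"
proof -
  let ?single = "\<lambda>k. if k = j then 1 else 0"
    and ?copies = "\<lambda>k. if k = i then c j div c i else 0"
  have "?single \<noteq> ?copies"
    using fun_cong[of ?single ?copies j] assms(5) by auto
  then have "card {?single, ?copies} = 2"
    by simp
  moreover have "{?single, ?copies} \<subseteq> part_counts I c (c j)"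
    using assms by (auto simp: part_counts_def weight_indicator)
  ultimately show ?thesis
    using card_mono[OF finite_part_counts[OF assms(1,2)]] by metis
qed

lemma card_part_counts_le_one:
  assumes "finite I" "i \<in> I" "0 < c i" "\<forall>k\<in>I - {i}. n < c k"
  shows "card (part_counts I c n) \<le> 1"
proof -
  have "x = (\<lambda>k. if k = i then n div c i else 0)" if x: "x \<in> part_counts I c n" for x
  proof -
    have zero: "x k = 0" if "k \<noteq> i" for k
    proof (cases "k \<in> I")
      case True
      have "x k * c k \<le> n"
        using x True assms(1) member_le_sum[of k I "\<lambda>k. x k * c k"]
        by (simp add: part_counts_def weight_def)
      moreover have "n < c k"
        using assms(4) True that by blast
      ultimately show ?thesis
        by (cases "x k") auto
    qed (use x in \<open>simp add: part_counts_def\<close>)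
    then have x_eq: "x = (\<lambda>k. if k = i then x i else 0)"
      by auto
    then have "x i * c i = n"
      using x weight_indicator[OF assms(1,2), of c "x i"] by (simp add: part_counts_def)
    then have "x i = n div c i"
      using assms(3) by auto
    with zero show ?thesis
      by auto
  qed
  then have "part_counts I c n \<subseteq> {\<lambda>k. if k = i then n div c i else 0}"
    by blast
  then show ?thesis
    using card_mono[of "{_}"] by fastforce
qed

lemma inverse_one_minus_fps_X_power:
  assumes "0 < k"
  shows "inverse (1 - fps_X ^ k :: 'a::field fps) = Abs_fps (\<lambda>i. if k dvd i then 1 else 0)"
proof (rule fps_inverse_unique, rule fps_ext)
  fix n
  show "fps_nth ((1 - fps_X ^ k) * Abs_fps (\<lambda>i. if k dvd i then 1 else 0 :: 'a)) n
          = fps_nth (1 :: 'a fps) n"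
  proof (cases "n < k")
    case True
    then show ?thesis
      using assms by (auto simp: algebra_simps fps_X_power_mult_nth dest: dvd_imp_le)
  next
    case False
    then have "k dvd n \<longleftrightarrow> k dvd (n - k)" by (simp add: dvd_minus_self)
    then show ?thesis
      using False assms by (auto simp: algebra_simps fps_X_power_mult_nth)
  qed
qed

lemma fps_nth_inverse_prod_one_minus_fps_X_power:
  assumes "finite I" "\<forall>i\<in>I. 0 < c i"
  shows "fps_nth (inverse (\<Prod>i\<in>I. 1 - fps_X ^ c i :: 'a::field fps)) n
           = of_nat (card (part_counts I c n))"
  using assms
proof (induction I arbitrary: n rule: finite_induct)
  case empty
  then show ?case by (simp add: part_counts_empty)
next
  case (insert a I)
  let ?K = "{k. k \<le> n \<and> c a dvd k}"
  have "fps_nth (inverse (\<Prod>i\<in>insert a I. 1 - fps_X ^ c i :: 'a fps)) n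
        = (\<Sum>k\<le>n. (if c a dvd k then 1 else 0) * of_nat (card (part_counts I c (n - k))))"
    using insert
    by (simp add: fps_inverse_mult fps_mult_nth inverse_one_minus_fps_X_power atLeast0AtMost)
  also have "\<dots> = (\<Sum>k\<in>?K. of_nat (card (part_counts I c (n - k))))"
    by (rule sum.mono_neutral_cong_right) auto
  also have "\<dots> = of_nat (card (SIGMA k:?K. part_counts I c (n - k)))"
    using insert by (simp add: finite_part_counts)
  also have "\<dots> = of_nat (card (part_counts (insert a I) c n))"
    using insert bij_betw_part_counts_insert[of I a c n] by (simp add: bij_betw_same_card)
  finally show ?case .
qed

section \<open>Partitions into parts from two residue classes\<close>

definition part_index :: "nat \<Rightarrow> (nat \<times> bool) set" where
  "part_index L = {..<L} \<times> UNIV"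

text \<open>Index \<open>(j, False)\<close> stands for the part \<open>a + m j\<close> of \<open>(q\<^sup>a; q\<^sup>m)\<^sub>L\<close> and
  \<open>(j, True)\<close> for the part \<open>b + m j\<close> of \<open>(q\<^sup>b; q\<^sup>m)\<^sub>L\<close>.\<close>

definition residue_parts :: "nat \<Rightarrow> nat \<Rightarrow> nat \<Rightarrow> nat \<times> bool \<Rightarrow> nat" where
  "residue_parts m a b = (\<lambda>(j, second). (if second then b else a) + m * j)"

lemma residue_parts_simps [simp]:
  "residue_parts m a b (j, False) = a + m * j" "residue_parts m a b (j, True) = b + m * j"
  by (simp_all add: residue_parts_def)

lemma residue_parts_pos: "0 < a \<Longrightarrow> 0 < b \<Longrightarrow> 0 < residue_parts m a b i"
  by (cases i) (simp add: residue_parts_def)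

lemma sum_part_index: "(\<Sum>i\<in>part_index L. f i) = (\<Sum>j<L. f (j, False) + f (j, True))"
proof -
  have "(\<Sum>i\<in>part_index L. f i) = (\<Sum>j<L. \<Sum>b\<in>UNIV. f (j, b))"
    by (simp add: part_index_def sum.cartesian_product)
  then show ?thesis by (simp add: UNIV_bool add.commute)
qed

lemma prod_part_index: "(\<Prod>i\<in>part_index L. f i) = (\<Prod>j<L. f (j, False) * f (j, True))"
proof -
  have "(\<Prod>i\<in>part_index L. f i) = (\<Prod>j<L. \<Prod>b\<in>UNIV. f (j, b))"
    by (simp add: part_index_def prod.cartesian_product)
  then show ?thesis by (simp add: UNIV_bool mult.commute)
qed

lemma qpoch_mult_qpoch:
  "qpoch a m L * qpoch b m L = (\<Prod>i\<in>part_index L. 1 - fps_X ^ residue_parts m a b i)"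
  by (simp add: prod_part_index qpoch_def residue_parts_def prod.distrib)

lemma fps_nth_inverse_qpoch_mult_qpoch:
  assumes "0 < a" "0 < b"
  shows "fps_nth (inverse (qpoch a m L * qpoch b m L)) n
           = real (card (part_counts (part_index L) (residue_parts m a b) n))"
  unfolding qpoch_mult_qpoch using assms
  by (intro fps_nth_inverse_prod_one_minus_fps_X_power)
     (simp_all add: part_index_def residue_parts_pos)

section \<open>Operations on multiplicity functions\<close>

locale residue_partitions =
  fixes L :: nat
  assumes L_pos: "0 < L"
begin

abbreviation I :: "(nat \<times> bool) set" where
  "I \<equiv> part_index L"

lemma finite_I: "finite I"
  by (simp add: part_index_def)

lemma zero_in_I: "(0, b) \<in> I"
  using L_pos by (simp add: part_index_def)

definition first_count :: "(nat \<times> bool \<Rightarrow> nat) \<Rightarrow> nat" where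
  "first_count x = (\<Sum>j<L. x (j, False))"

definition second_count :: "(nat \<times> bool \<Rightarrow> nat) \<Rightarrow> nat" where
  "second_count x = (\<Sum>j<L. x (j, True))"

definition excess :: "(nat \<times> bool \<Rightarrow> nat) \<Rightarrow> int" where
  "excess x = int (first_count x) - int (second_count x)"

text \<open>Reading the multiplicities of \<open>x\<close> with parts \<open>1 + m j\<close>, \<open>a + b - 1 + m j\<close> instead of
  \<open>a + m j\<close>, \<open>b + m j\<close> loses \<open>(a - 1) (first_count x - second_count x)\<close> in weight, which is
  restored as ones. The truncated subtraction makes this meaningful only if
  \<open>second_count x \<le> first_count x\<close>.\<close>

definition transfer :: "nat \<Rightarrow> (nat \<times> bool \<Rightarrow> nat) \<Rightarrow> nat \<times> bool \<Rightarrow> nat" where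
  "transfer a x = x((0, False) := x (0, False) + (a - 1) * (first_count x - second_count x))"

definition swap_sides :: "(nat \<times> bool \<Rightarrow> nat) \<Rightarrow> nat \<times> bool \<Rightarrow> nat" where
  "swap_sides x = (\<lambda>(j, second). x (j, \<not> second))"

text \<open>With parts \<open>1 + m j\<close>, \<open>m - 1 + m j\<close>: replace \<open>m - 1\<close> ones by a single part \<open>m - 1\<close>.\<close>

definition merge_ones :: "nat \<Rightarrow> (nat \<times> bool \<Rightarrow> nat) \<Rightarrow> nat \<times> bool \<Rightarrow> nat" where
  "merge_ones m x = x((0, False) := x (0, False) - (m - 1), (0, True) := x (0, True) + 1)"

lemma first_count_fun_upd:
  "first_count (x((0, False) := t)) + x (0, False) = first_count x + t"
  "first_count (x((0, True) := t)) = first_count x"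
  using L_pos by (simp_all add: first_count_def sum.remove[of "{..<L}" 0])

lemma second_count_fun_upd:
  "second_count (x((0, True) := t)) + x (0, True) = second_count x + t"
  "second_count (x((0, False) := t)) = second_count x"
  using L_pos by (simp_all add: second_count_def sum.remove[of "{..<L}" 0])

lemma counts_swap_sides:
  "first_count (swap_sides x) = second_count x" "second_count (swap_sides x) = first_count x"
  by (simp_all add: first_count_def second_count_def swap_sides_def)

lemma excess_transfer:
  assumes "second_count x \<le> first_count x" "0 < a"
  shows "excess (transfer a x) = int a * excess x"
proof -
  define k where "k = (a - 1) * (first_count x - second_count x)"
  have "first_count (transfer a x) = first_count x + k"
    using first_count_fun_upd(1)[of x "x (0, False) + k"] by (simp add: transfer_def k_def)
  moreover have "int k = (int a - 1) * excess x"
    using assms by (simp add: k_def excess_def)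
  ultimately show ?thesis
    by (simp add: excess_def transfer_def second_count_fun_upd algebra_simps)
qed

lemma excess_swap_sides: "excess (swap_sides x) = - excess x"
  by (simp add: excess_def counts_swap_sides)

lemma excess_merge_ones:
  assumes "m - 1 \<le> x (0, False)" "0 < m"
  shows "excess (merge_ones m x) = excess x - int m"
proof -
  let ?y = "x((0, False) := x (0, False) - (m - 1))"
  have "int (first_count ?y) = int (first_count x) - int (m - 1)"
    using first_count_fun_upd(1)[of x "x (0, False) - (m - 1)"] assms(1) by simp
  moreover have "second_count (merge_ones m x) = second_count ?y + 1"
    using second_count_fun_upd(1)[of ?y "x (0, True) + 1"] by (simp add: merge_ones_def)
  ultimately show ?thesis
    using assms by (simp add: excess_def merge_ones_def first_count_fun_upd second_count_fun_upd)
qed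

lemma weight_residue_parts:
  "weight I (residue_parts m a b) x
     = (\<Sum>j<L. x (j, False) * (a + m * j) + x (j, True) * (b + m * j))"
  by (simp add: weight_def sum_part_index)

lemma weight_residue_parts_exchange:
  assumes "0 < a"
  shows "weight I (residue_parts m a b) x + (a - 1) * second_count x
           = weight I (residue_parts m 1 (a + b - 1)) x + (a - 1) * first_count x"
proof -
  have "x (j, False) * (a + m * j) + x (j, True) * (b + m * j) + (a - 1) * x (j, True)
          = x (j, False) * (1 + m * j) + x (j, True) * (a + b - 1 + m * j) + (a - 1) * x (j, False)"
    for j
    using assms by (cases a) (simp_all add: algebra_simps)
  then show ?thesis
    by (simp add: weight_residue_parts first_count_def second_count_def sum_distrib_left
        sum.distrib[symmetric])
qed

lemma weight_transfer:
  assumes "second_count x \<le> first_count x" "0 < a"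
  shows "weight I (residue_parts m 1 (a + b - 1)) (transfer a x) = weight I (residue_parts m a b) x"
proof -
  have "weight I (residue_parts m 1 (a + b - 1)) (transfer a x)
          = weight I (residue_parts m 1 (a + b - 1)) x + (a - 1) * (first_count x - second_count x)"
    using weight_fun_upd[OF finite_I zero_in_I[of False], of "residue_parts m 1 (a + b - 1)" x
        "x (0, False) + (a - 1) * (first_count x - second_count x)"]
    by (simp add: transfer_def)
  then show ?thesis
    using weight_residue_parts_exchange[OF assms(2), of m b x]
      mult_le_mono2[OF assms(1), of "a - 1"]
    unfolding diff_mult_distrib2 by linarith
qed

lemma weight_swap_sides:
  "weight I (residue_parts m a b) (swap_sides x) = weight I (residue_parts m b a) x"
  by (simp add: weight_residue_parts swap_sides_def add.commute)

lemma weight_merge_ones: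
  assumes "m - 1 \<le> x (0, False)"
  shows "weight I (residue_parts m 1 (m - 1)) (merge_ones m x)
           = weight I (residue_parts m 1 (m - 1)) x"
proof -
  let ?c = "residue_parts m 1 (m - 1)" and ?y = "x((0, False) := x (0, False) - (m - 1))"
  have "weight I ?c ?y + (m - 1) = weight I ?c x"
    using assms weight_fun_upd[OF finite_I zero_in_I[of False], of ?c x "x (0, False) - (m - 1)"]
    by simp linarith
  moreover have "weight I ?c (merge_ones m x) = weight I ?c ?y + (m - 1)"
    using weight_fun_upd[OF finite_I zero_in_I[of True], of ?c ?y "x (0, True) + 1"]
    by (simp add: merge_ones_def algebra_simps)
  ultimately show ?thesis
    by simp
qed

lemma transfer_in_part_counts:
  assumes "x \<in> part_counts I (residue_parts m a b) n" "second_count x \<le> first_count x" "0 < a"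
  shows "transfer a x \<in> part_counts I (residue_parts m 1 (a + b - 1)) n"
proof -
  have "\<forall>i. i \<notin> I \<longrightarrow> transfer a x i = 0"
    using assms(1) zero_in_I[of False] by (auto simp: part_counts_def transfer_def)
  then show ?thesis
    using assms weight_transfer[OF assms(2,3)] by (simp add: part_counts_def)
qed

lemma swap_sides_in_part_counts:
  assumes "x \<in> part_counts I (residue_parts m a b) n"
  shows "swap_sides x \<in> part_counts I (residue_parts m b a) n"
proof -
  have "\<forall>i. i \<notin> I \<longrightarrow> swap_sides x i = 0"
    using assms by (auto simp: part_counts_def swap_sides_def part_index_def)
  then show ?thesis
    using assms by (simp add: part_counts_def weight_swap_sides)
qed

lemma merge_ones_in_part_counts:
  assumes "x \<in> part_counts I (residue_parts m 1 (m - 1)) n" "m - 1 \<le> x (0, False)"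
  shows "merge_ones m x \<in> part_counts I (residue_parts m 1 (m - 1)) n"
proof -
  have "\<forall>i. i \<notin> I \<longrightarrow> merge_ones m x i = 0"
    using assms(1) zero_in_I by (auto simp: part_counts_def merge_ones_def)
  then show ?thesis
    using assms weight_merge_ones[of m x] by (simp add: part_counts_def)
qed

lemma inj_on_transfer:
  assumes "0 < a"
  shows "inj_on (transfer a) {x. second_count x \<le> first_count x}"
proof (rule inj_onI)
  fix x y
  assume x: "x \<in> {x. second_count x \<le> first_count x}"
    and y: "y \<in> {x. second_count x \<le> first_count x}"
    and eq: "transfer a x = transfer a y"
  have "int a * excess x = int a * excess y"
    using excess_transfer[of x a] excess_transfer[of y a] x y assms eq by simp
  then have "first_count x - second_count x = first_count y - second_count y"
    using x y assms by (simp add: excess_def)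
  then have "x (0, False) = y (0, False)"
    using fun_cong[OF eq, of "(0, False)"] by (simp add: transfer_def)
  moreover have "x i = y i" if "i \<noteq> (0, False)" for i
    using fun_cong[OF eq, of i] that by (simp add: transfer_def)
  ultimately show "x = y"
    by (metis ext)
qed

lemma swap_sides_swap_sides [simp]: "swap_sides (swap_sides x) = x"
  by (simp add: swap_sides_def split_def)

lemma inj_swap_sides: "inj swap_sides"
  by (metis injI swap_sides_swap_sides)

lemma inj_on_transfer_swap_sides:
  assumes "0 < a"
  shows "inj_on (transfer a \<circ> swap_sides) {u. first_count u \<le> second_count u}"
  using assms
  by (intro comp_inj_on inj_on_subset[OF inj_swap_sides] inj_on_subset[OF inj_on_transfer])
     (auto simp: counts_swap_sides)

lemma inj_on_merge_ones: "inj_on (merge_ones m) {x. m - 1 \<le> x (0, False)}"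
proof (rule inj_onI)
  fix x y
  assume x: "x \<in> {x. m - 1 \<le> x (0, False)}" and y: "y \<in> {x. m - 1 \<le> x (0, False)}"
    and eq: "merge_ones m x = merge_ones m y"
  have "x (0, False) = y (0, False)"
    using fun_cong[OF eq, of "(0, False)"] x y by (simp add: merge_ones_def)
  moreover have "x (0, True) = y (0, True)"
    using fun_cong[OF eq, of "(0, True)"] by (simp add: merge_ones_def)
  moreover have "x i = y i" if "i \<noteq> (0, False)" "i \<noteq> (0, True)" for i
    using fun_cong[OF eq, of i] that by (simp add: merge_ones_def)
  ultimately show "x = y"
    by (metis ext)
qed

end

section \<open>The injection\<close>

lemma common_multiple_bound:
  fixes r s d e :: nat
  assumes "\<not> r dvd s" "\<not> s dvd r" "r * d = s * e" "0 < e"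
  shows "r + s - 1 \<le> max ((r - 1) * d) ((s - 1) * e)"
proof -
  have "e \<noteq> 1" "d \<noteq> 1"
    using assms(1-3) by (metis dvd_triv_left mult.right_neutral)+
  moreover have "d \<noteq> 0"
    using assms by (metis dvd_0_right mult_is_0 neq0_conv)
  ultimately have "2 \<le> d" "2 \<le> e"
    using assms(4) by linarith+
  then have "(r - 1) * 2 \<le> (r - 1) * d" "(s - 1) * 2 \<le> (s - 1) * e"
    by (simp_all add: mult_le_mono2)
  moreover have "r \<noteq> s"
    using assms(1) by auto
  ultimately show ?thesis
    by linarith
qed

locale residue_pair = residue_partitions +
  fixes r s :: nat
  assumes two_le_r: "2 \<le> r" and two_le_s: "2 \<le> s"
begin

abbreviation A_counts :: "nat \<Rightarrow> (nat \<times> bool \<Rightarrow> nat) set" where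
  "A_counts n \<equiv> part_counts I (residue_parts (r + s) 1 (r + s - 1)) n"

abbreviation B_counts :: "nat \<Rightarrow> (nat \<times> bool \<Rightarrow> nat) set" where
  "B_counts n \<equiv> part_counts I (residue_parts (r + s) r s) n"

definition collides :: "nat \<Rightarrow> (nat \<times> bool \<Rightarrow> nat) \<Rightarrow> bool" where
  "collides n u \<longleftrightarrow>
     transfer s (swap_sides u) \<in> transfer r ` {v \<in> B_counts n. second_count v \<le> first_count v}"

definition to_A :: "nat \<Rightarrow> (nat \<times> bool \<Rightarrow> nat) \<Rightarrow> nat \<times> bool \<Rightarrow> nat" where
  "to_A n u =
     (if second_count u \<le> first_count u then transfer r u
      else if collides n u then merge_ones (r + s) (transfer s (swap_sides u))
      else transfer s (swap_sides u))"

lemma collision_many_ones: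
  assumes "\<not> r dvd s" "\<not> s dvd r" "first_count u < second_count u" "collides n u"
  shows "r + s - 1 \<le> transfer s (swap_sides u) (0, False)"
proof -
  obtain v where v: "second_count v \<le> first_count v" "transfer r v = transfer s (swap_sides u)"
    using assms(4) by (auto simp: collides_def)
  have "int r * excess v = int s * - excess u"
    using excess_transfer[OF v(1), of r] excess_transfer[of "swap_sides u" s] v(2) assms(3)
      two_le_r two_le_s
    by (simp add: counts_swap_sides excess_swap_sides)
  then have "int (r * (first_count v - second_count v))
               = int (s * (second_count u - first_count u))"
    using v(1) assms(3) by (simp add: excess_def)
  then have "r * (first_count v - second_count v) = s * (second_count u - first_count u)"
    by (simp only: of_nat_eq_iff)
  then have "r + s - 1 \<le> max ((r - 1) * (first_count v - second_count v))
                               ((s - 1) * (second_count u - first_count u))"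
    using common_multiple_bound[OF assms(1,2)] assms(3) by simp
  also have "\<dots> \<le> transfer s (swap_sides u) (0, False)"
  proof (rule max.boundedI)
    show "(r - 1) * (first_count v - second_count v) \<le> transfer s (swap_sides u) (0, False)"
      unfolding v(2)[symmetric] by (simp add: transfer_def)
    show "(s - 1) * (second_count u - first_count u) \<le> transfer s (swap_sides u) (0, False)"
      by (simp add: transfer_def counts_swap_sides)
  qed
  finally show ?thesis .
qed

lemma transfer_swap_sides_in_A_counts:
  assumes "u \<in> B_counts n" "first_count u \<le> second_count u"
  shows "transfer s (swap_sides u) \<in> A_counts n"
  using transfer_in_part_counts[OF swap_sides_in_part_counts[OF assms(1)]] assms(2) two_le_s
  by (simp add: counts_swap_sides add.commute)

lemma to_A_in_A_counts:
  assumes "\<not> r dvd s" "\<not> s dvd r" "u \<in> B_counts n"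
  shows "to_A n u \<in> A_counts n"
  using assms two_le_r transfer_in_part_counts[OF assms(3)]
    transfer_swap_sides_in_A_counts[OF assms(3)] collision_many_ones[OF assms(1,2), of u n]
    merge_ones_in_part_counts[of "transfer s (swap_sides u)" "r + s" n]
  by (auto simp: to_A_def)

lemma excess_to_A:
  assumes "\<not> r dvd s" "\<not> s dvd r"
  shows "second_count u \<le> first_count u \<Longrightarrow> int r dvd excess (to_A n u)"
    and "first_count u < second_count u \<Longrightarrow> \<not> collides n u \<Longrightarrow> int s dvd excess (to_A n u)"
    and "first_count u < second_count u \<Longrightarrow> collides n u \<Longrightarrow>
           \<not> int r dvd excess (to_A n u) \<and> \<not> int s dvd excess (to_A n u)"
proof -
  have swapped: "excess (transfer s (swap_sides u)) = - int s * excess u"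
    if "first_count u < second_count u"
    using that two_le_s excess_transfer[of "swap_sides u" s]
    by (simp add: counts_swap_sides excess_swap_sides)
  show "second_count u \<le> first_count u \<Longrightarrow> int r dvd excess (to_A n u)"
    using two_le_r by (simp add: to_A_def excess_transfer)
  show "first_count u < second_count u \<Longrightarrow> \<not> collides n u \<Longrightarrow> int s dvd excess (to_A n u)"
    using swapped by (simp add: to_A_def)
  assume lt: "first_count u < second_count u" and coll: "collides n u"
  obtain v where v: "second_count v \<le> first_count v" "transfer r v = transfer s (swap_sides u)"
    using coll by (auto simp: collides_def)
  have r_dvd: "int r dvd excess (transfer s (swap_sides u))"
    using v two_le_r excess_transfer[OF v(1), of r] by simp
  have s_dvd: "int s dvd excess (transfer s (swap_sides u))"
    using swapped[OF lt] by simp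
  have "excess (to_A n u) = excess (transfer s (swap_sides u)) - (int r + int s)"
    using lt coll collision_many_ones[OF assms lt coll] two_le_r
    by (simp add: to_A_def excess_merge_ones)
  then show "\<not> int r dvd excess (to_A n u) \<and> \<not> int s dvd excess (to_A n u)"
    using assms r_dvd s_dvd by (simp add: dvd_diff_right_iff)
qed

lemma to_A_notin_image_transfer:
  assumes "first_count u < second_count u" "\<not> collides n u"
  shows "to_A n u \<notin> transfer r ` {v \<in> B_counts n. second_count v \<le> first_count v}"
  using assms by (simp add: to_A_def collides_def)

lemma inj_on_to_A:
  assumes "\<not> r dvd s" "\<not> s dvd r"
  shows "inj_on (to_A n) (B_counts n)"
proof -
  define P1 where "P1 = {u \<in> B_counts n. second_count u \<le> first_count u}"
  define P2 where "P2 = {u \<in> B_counts n. first_count u < second_count u \<and> \<not> collides n u}"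
  define P3 where "P3 = {u \<in> B_counts n. first_count u < second_count u \<and> collides n u}"
  have pos: "0 < r" "0 < s"
    using two_le_r two_le_s by simp_all
  have P1_sub: "P1 \<subseteq> {u. second_count u \<le> first_count u}"
    by (auto simp: P1_def)
  have swappable: "P2 \<subseteq> {u. first_count u \<le> second_count u}"
    "P3 \<subseteq> {u. first_count u \<le> second_count u}"
    by (auto simp: P2_def P3_def)
  have "inj_on (to_A n) P1 \<longleftrightarrow> inj_on (transfer r) P1"
    by (rule inj_on_cong) (simp add: P1_def to_A_def)
  then have inj1: "inj_on (to_A n) P1"
    using inj_on_subset[OF inj_on_transfer[OF pos(1)] P1_sub] by simp
  have "inj_on (to_A n) P2 \<longleftrightarrow> inj_on (transfer s \<circ> swap_sides) P2"
    by (rule inj_on_cong) (simp add: P2_def to_A_def)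
  then have inj2: "inj_on (to_A n) P2"
    using inj_on_subset[OF inj_on_transfer_swap_sides[OF pos(2)] swappable(1)] by simp
  have "inj_on (to_A n) P3 \<longleftrightarrow> inj_on (merge_ones (r + s) \<circ> (transfer s \<circ> swap_sides)) P3"
    by (rule inj_on_cong) (simp add: P3_def to_A_def)
  moreover have "inj_on (transfer s \<circ> swap_sides) P3"
    using inj_on_subset[OF inj_on_transfer_swap_sides[OF pos(2)] swappable(2)] .
  moreover have "(transfer s \<circ> swap_sides) ` P3 \<subseteq> {x. r + s - 1 \<le> x (0, False)}"
    using collision_many_ones[OF assms] by (auto simp: P3_def)
  ultimately have inj3: "inj_on (to_A n) P3"
    using inj_on_merge_ones[of "r + s"] by (metis comp_inj_on inj_on_subset)
  have dvd1: "int r dvd excess w" if "w \<in> to_A n ` P1" for w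
    using that excess_to_A(1)[OF assms] by (auto simp: P1_def)
  have dvd2: "int s dvd excess w" if "w \<in> to_A n ` P2" for w
    using that excess_to_A(2)[OF assms] by (auto simp: P2_def)
  have not_dvd3: "\<not> int r dvd excess w \<and> \<not> int s dvd excess w" if "w \<in> to_A n ` P3" for w
    using that excess_to_A(3)[OF assms] by (auto simp: P3_def)
  have "to_A n ` P1 = transfer r ` P1"
    by (rule image_cong) (simp_all add: P1_def to_A_def)
  moreover have "to_A n u \<notin> transfer r ` P1" if "u \<in> P2" for u
    using that to_A_notin_image_transfer[of u n] by (simp add: P1_def P2_def)
  ultimately have "to_A n ` P1 \<inter> to_A n ` P2 = {}"
    by (auto simp: disjoint_iff) (metis imageI)
  moreover have "to_A n ` P1 \<inter> to_A n ` P3 = {}" "to_A n ` P2 \<inter> to_A n ` P3 = {}"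
    using dvd1 dvd2 not_dvd3 by blast+
  ultimately have "inj_on (to_A n) (P1 \<union> (P2 \<union> P3))"
    using inj1 inj2 inj3 unfolding inj_on_Un by blast
  moreover have "B_counts n = P1 \<union> (P2 \<union> P3)"
    by (auto simp: P1_def P2_def P3_def)
  ultimately show ?thesis
    by simp
qed

lemma card_B_counts_le_card_A_counts:
  assumes "\<not> r dvd s" "\<not> s dvd r"
  shows "card (B_counts n) \<le> card (A_counts n)"
proof (rule card_inj_on_le)
  show "finite (A_counts n)"
    using two_le_r by (intro finite_part_counts finite_I) (simp add: residue_parts_pos)
qed (use to_A_in_A_counts[OF assms] inj_on_to_A[OF assms] in auto)

lemma card_A_counts_le_one:
  assumes "n < r + s - 1"
  shows "card (A_counts n) \<le> 1"
proof (rule card_part_counts_le_one[OF finite_I zero_in_I[of False]])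
  show "\<forall>k\<in>I - {(0, False)}. n < residue_parts (r + s) 1 (r + s - 1) k"
  proof
    fix k assume "k \<in> I - {(0, False)}"
    then obtain j b where "k = (j, b)" "b \<or> 0 < j"
      by (cases k) auto
    then show "n < residue_parts (r + s) 1 (r + s - 1) k"
    proof (cases b)
      case False
      then have "r + s \<le> (r + s) * j"
        using \<open>b \<or> 0 < j\<close> by simp
      moreover have "residue_parts (r + s) 1 (r + s - 1) k = 1 + (r + s) * j"
        using \<open>k = (j, b)\<close> False by simp
      ultimately show ?thesis
        using assms by linarith
    qed (use assms \<open>k = (j, b)\<close> in simp)
  qed
qed simp

lemma card_A_counts_lt_card_B_counts:
  assumes "r dvd s \<or> s dvd r"
  shows "\<exists>n. card (A_counts n) < card (B_counts n)"
proof -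
  have positive: "\<forall>k\<in>I. 0 < residue_parts (r + s) r s k"
    using two_le_r two_le_s by (simp add: residue_parts_pos)
  show ?thesis
  proof (cases "r dvd s")
    case True
    have "2 \<le> card (B_counts s)"
      using two_le_card_part_counts[OF finite_I positive zero_in_I zero_in_I, of False True] True
      by simp
    moreover have "card (A_counts s) \<le> 1"
      using two_le_r by (intro card_A_counts_le_one) simp
    ultimately show ?thesis
      by (intro exI[of _ s]) simp
  next
    case False
    then have "s dvd r"
      using assms by simp
    then have "2 \<le> card (B_counts r)"
      using two_le_card_part_counts[OF finite_I positive zero_in_I zero_in_I, of True False]
      by simp
    moreover have "card (A_counts r) \<le> 1"
      using two_le_s by (intro card_A_counts_le_one) simp
    ultimately show ?thesis
      by (intro exI[of _ r]) simp
  qed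
qed

end

theorem card_part_counts_residue_parts_le_iff:
  assumes "0 < L" "2 \<le> r" "2 \<le> s"
  shows "(\<forall>n. card (part_counts (part_index L) (residue_parts (r + s) r s) n)
              \<le> card (part_counts (part_index L) (residue_parts (r + s) 1 (r + s - 1)) n))
         \<longleftrightarrow> \<not> r dvd s \<and> \<not> s dvd r"
proof -
  interpret residue_pair L r s
    using assms by unfold_locales
  show ?thesis
    using card_B_counts_le_card_A_counts card_A_counts_lt_card_B_counts by (meson not_le)
qed

theorem theorem4:
  fixes L m r :: nat
  assumes "L > 0" and "1 < r" and "r < m - 1"
  shows "(\<forall>n. fps_nth (inverse (qpoch 1 m L * qpoch (m - 1) m L)
                      - inverse (qpoch r m L * qpoch (m - r) m L)) n \<ge> 0)
         \<longleftrightarrow> (\<not> r dvd (m - r) \<and> \<not> (m - r) dvd r)"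
proof -
  define s where "s = m - r"
  have m: "m = r + s" and "2 \<le> r" "2 \<le> s"
    using assms by (auto simp: s_def)
  have "fps_nth (inverse (qpoch 1 m L * qpoch (m - 1) m L)
                 - inverse (qpoch r m L * qpoch (m - r) m L)) n
        = real (card (part_counts (part_index L) (residue_parts (r + s) 1 (r + s - 1)) n))
          - real (card (part_counts (part_index L) (residue_parts (r + s) r s) n))" for n
    using assms \<open>2 \<le> s\<close> by (simp add: fps_nth_inverse_qpoch_mult_qpoch flip: s_def m)
  then show ?thesis
    using card_part_counts_residue_parts_le_iff[OF assms(1) \<open>2 \<le> r\<close> \<open>2 \<le> s\<close>]
    by (simp add: s_def)
qed

end
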